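(* In the setting (R), fix $x\in\mathbb{R}^n$. Then $v_{\lambda,\mu}+w_{\lambda,\mu}\to x$ as $\lambda,\mu\to0^+$; consequently $u_{\lambda,\mu}-v_{\lambda,\mu}\to0$, so that along any sequence $(\lambda_k,\mu_k)$ with $\lambda_k,\mu_k>0$ converging to $(0,0)$, the cluster points of $(v_{\lambda_k,\mu_k})_k$ and of $(u_{\lambda_k,\mu_k})_k$ coincide. Moreover, every such cluster point belongs to $U(x)$.
   Context: Setting (R): Let $F_1=\|\cdot\|$ and $F_2=|||\cdot|||$ be two norms on $\mathbb{R}^n$, with dual norms $\|\cdot\|_*$ and $|||\cdot|||_*$, so that $F_2^*(y)=I\{|||y|||_*\le1\}$ (indicator: $0$ if $|||y|||_*\le1$, $+\infty$ otherwise). For $x\in\mathbb{R}^n$ define $S(x)=\min_{u\in\mathbb{R}^n}F_1(u)+F_2^*(x-u)$ and $U(x)=\arg\min_{u\in\mathbb{R}^n}F_1(u)+F_2^*(x-u)$. For $\lambda,\mu>0$, problem (P) is $$\min_{v,w\in\mathbb{R}^n}\ F_1(v)+\frac{\lambda}{2}\|v\|_2^2+F_2^*(w)+\frac{1}{2\mu}\|x-v-w\|_2^2,$$ which has a unique minimizer denoted $(v_{\lambda,\mu},w_{\lambda,\mu})$; its minimal value is denoted $S_{\lambda,\mu}(x)$; set $u_{\lambda,\mu}=x-w_{\lambda,\mu}$. *)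

theory Defs
  imports "HOL-Analysis.Analysis"
begin

definition is_norm :: "(real^'n \<Rightarrow> real) \<Rightarrow> bool" where
  "is_norm N \<longleftrightarrow> (\<forall>x. N x = 0 \<longleftrightarrow> x = 0) \<and> (\<forall>a x. N (a *\<^sub>R x) = \<bar>a\<bar> * N x)
     \<and> (\<forall>x y. N (x + y) \<le> N x + N y)"

definition dual_norm :: "(real^'n \<Rightarrow> real) \<Rightarrow> real^'n \<Rightarrow> real" where
  "dual_norm N y = Sup {x \<bullet> y | x. N x \<le> 1}"

text \<open>F2^* is the indicator of the dual unit ball; it is finite (=0) exactly on
  the set below, so minimising F(u) + F2^*(x-u) means minimising F(u) subject to
  dual_norm N2 (x-u) \<le> 1.\<close>
definition dual_ball :: "(real^'n \<Rightarrow> real) \<Rightarrow> (real^'n) set" where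
  "dual_ball N = {y. dual_norm N y \<le> 1}"

text \<open>U(x) = argmin_u F1(u) + F2^*(x-u).\<close>
definition U_set :: "(real^'n \<Rightarrow> real) \<Rightarrow> (real^'n \<Rightarrow> real) \<Rightarrow> real^'n \<Rightarrow> (real^'n) set" where
  "U_set N1 N2 x = {u. x - u \<in> dual_ball N2 \<and>
      (\<forall>u'. x - u' \<in> dual_ball N2 \<longrightarrow> N1 u \<le> N1 u')}"

text \<open>Objective of problem (P) on its effective domain (w in the dual ball).\<close>
definition P_obj :: "(real^'n \<Rightarrow> real) \<Rightarrow> real \<Rightarrow> real \<Rightarrow> real^'n \<Rightarrow> real^'n \<Rightarrow> real^'n \<Rightarrow> real" where
  "P_obj N1 lam mu x v w = N1 v + lam / 2 * (norm v)\<^sup>2 + 1 / (2 * mu) * (norm (x - v - w))\<^sup>2"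

definition is_P_min :: "(real^'n \<Rightarrow> real) \<Rightarrow> (real^'n \<Rightarrow> real) \<Rightarrow> real \<Rightarrow> real \<Rightarrow> real^'n \<Rightarrow> real^'n \<Rightarrow> real^'n \<Rightarrow> bool" where
  "is_P_min N1 N2 lam mu x v w \<longleftrightarrow> w \<in> dual_ball N2 \<and>
     (\<forall>v' w'. w' \<in> dual_ball N2 \<longrightarrow> P_obj N1 lam mu x v w \<le> P_obj N1 lam mu x v' w')"

definition cluster_point :: "(nat \<Rightarrow> 'a::topological_space) \<Rightarrow> 'a \<Rightarrow> bool" where
  "cluster_point s p \<longleftrightarrow> (\<exists>r. strict_mono r \<and> (s \<circ> r) \<longlonglongrightarrow> p)"

end

theory Submission
  imports Defs
begin

text \<open>Comparing the minimiser of (P) with the feasible pair \<open>(x, 0)\<close> bounds the squared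
  residual \<open>\<parallel>x - v - w\<parallel>\<^sup>2\<close> by \<open>2\<mu> (F\<^sub>1(x) + \<lambda>\<parallel>x\<parallel>\<^sup>2/2)\<close>, so \<open>v + w \<rightarrow> x\<close>.
  Comparing it with \<open>(u', x - u')\<close> for any feasible \<open>u'\<close> gives
  \<open>F\<^sub>1(v) \<le> F\<^sub>1(u') + \<lambda>\<parallel>u'\<parallel>\<^sup>2/2\<close>. Along a subsequence with \<open>v \<rightarrow> p\<close> we get
  \<open>w \<rightarrow> x - p\<close>, which stays in the closed dual ball, and continuity of \<open>F\<^sub>1\<close> turns the
  comparison into \<open>F\<^sub>1(p) \<le> F\<^sub>1(u')\<close>; hence \<open>p \<in> U(x)\<close>.\<close>

lemma is_norm_zero: "is_norm N \<Longrightarrow> N 0 = 0"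
  unfolding is_norm_def by blast

lemma is_norm_scaleR: "is_norm N \<Longrightarrow> N (c *\<^sub>R a) = \<bar>c\<bar> * N a"
  unfolding is_norm_def by blast

lemma is_norm_triangle: "is_norm N \<Longrightarrow> N (a + b) \<le> N a + N b"
  unfolding is_norm_def by blast

lemma is_norm_minus_commute:
  assumes "is_norm N" shows "N (a - b) = N (b - a)"
  using is_norm_scaleR[OF assms, of "-1" "b - a"] by simp

lemma is_norm_nonneg:
  assumes "is_norm N" shows "N a \<ge> 0"
  using is_norm_triangle[OF assms, of a "-a"] is_norm_minus_commute[OF assms, of 0 a]
  by (simp add: is_norm_zero[OF assms])

lemma is_norm_sum:
  assumes "is_norm N" shows "N (sum f A) \<le> (\<Sum>i\<in>A. N (f i))"
proof (induction A rule: infinite_finite_induct)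
  case (insert a F)
  then show ?case using is_norm_triangle[OF assms, of "f a" "sum f F"] by simp
qed (simp_all add: is_norm_zero[OF assms])

lemma is_norm_le_norm:
  fixes N :: "real^'n \<Rightarrow> real"
  assumes "is_norm N" obtains C where "\<And>a. N a \<le> C * norm a"
proof
  fix a :: "real^'n"
  have "N a = N (\<Sum>i\<in>UNIV. a$i *\<^sub>R axis i 1)"
    using basis_expansion[of a] by (simp add: scalar_mult_eq_scaleR)
  also have "\<dots> \<le> (\<Sum>i\<in>UNIV. N (a$i *\<^sub>R axis i 1))" by (rule is_norm_sum[OF assms])
  also have "\<dots> = (\<Sum>i\<in>UNIV. \<bar>a$i\<bar> * N (axis i 1))" by (simp add: is_norm_scaleR[OF assms])
  also have "\<dots> \<le> (\<Sum>i\<in>UNIV. norm a * N (axis i 1))"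
    by (intro sum_mono mult_right_mono component_le_norm_cart is_norm_nonneg[OF assms])
  finally show "N a \<le> (\<Sum>i\<in>UNIV. N (axis i 1)) * norm a"
    by (simp add: sum_distrib_left mult.commute)
qed

lemma is_norm_abs_diff_le:
  assumes "is_norm N" shows "\<bar>N a - N b\<bar> \<le> N (a - b)"
  using is_norm_triangle[OF assms, of "a - b" b] is_norm_triangle[OF assms, of "b - a" a]
    is_norm_minus_commute[OF assms, of a b] by simp

lemma tendsto_is_norm:
  fixes N :: "real^'n \<Rightarrow> real"
  assumes "is_norm N" and "(f \<longlongrightarrow> a) F"
  shows "((\<lambda>t. N (f t)) \<longlongrightarrow> N a) F"
proof -
  obtain C where C: "\<And>b. N b \<le> C * norm b" using is_norm_le_norm[OF assms(1)] by blast
  have "((\<lambda>t. norm (f t - a)) \<longlongrightarrow> 0) F"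
    using assms(2) by (intro tendsto_norm_zero LIM_zero)
  then have lim: "((\<lambda>t. C * norm (f t - a)) \<longlongrightarrow> 0) F"
    using tendsto_mult_left[of _ 0 F C] by simp
  have "norm (N (f t) - N a) \<le> C * norm (f t - a)" for t
    unfolding real_norm_def by (rule order_trans[OF is_norm_abs_diff_le[OF assms(1)] C])
  then have "((\<lambda>t. N (f t) - N a) \<longlongrightarrow> 0) F"
    by (intro Lim_null_comparison[OF always_eventually lim]) blast
  then show ?thesis by (rule LIM_zero_cancel)
qed

lemma continuous_on_is_norm:
  fixes N :: "real^'n \<Rightarrow> real"
  assumes "is_norm N" shows "continuous_on S N"
  unfolding continuous_on_def using tendsto_is_norm[OF assms tendsto_ident_at] by blast

lemma is_norm_ge_norm:
  fixes N :: "real^'n \<Rightarrow> real"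
  assumes "is_norm N" obtains c where "c > 0" and "\<And>a. c * norm a \<le> N a"
proof -
  have "sphere (0::real^'n) 1 \<noteq> {}" by simp
  then obtain a0 where a0: "a0 \<in> sphere 0 1" and min: "\<And>b. b \<in> sphere 0 1 \<Longrightarrow> N a0 \<le> N b"
    using continuous_attains_inf[OF compact_sphere _ continuous_on_is_norm[OF assms]] by blast
  have "a0 \<noteq> 0" using a0 by auto
  then have "N a0 \<noteq> 0" using assms unfolding is_norm_def by blast
  then have "N a0 > 0" using is_norm_nonneg[OF assms, of a0] by linarith
  moreover have "N a0 * norm a \<le> N a" for a
  proof (cases "a = 0")
    case False
    then have "N a0 \<le> N (inverse (norm a) *\<^sub>R a)" by (intro min) simp
    also have "\<dots> = N a / norm a" by (simp add: is_norm_scaleR[OF assms] divide_inverse_commute)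
    finally show ?thesis using False by (simp add: pos_le_divide_eq)
  qed (simp add: is_norm_zero[OF assms])
  ultimately show ?thesis using that by blast
qed

lemma dual_ball_eq_INT:
  fixes N :: "real^'n \<Rightarrow> real"
  assumes "is_norm N"
  shows "dual_ball N = (\<Inter>z\<in>{z. N z \<le> 1}. {y. z \<bullet> y \<le> 1})"
proof -
  obtain c where c: "c > 0" "\<And>a. c * norm a \<le> N a" using is_norm_ge_norm[OF assms] by blast
  have bdd: "bdd_above {z \<bullet> y | z. N z \<le> 1}" for y
  proof (rule bdd_aboveI)
    fix t assume "t \<in> {z \<bullet> y | z. N z \<le> 1}"
    then obtain z where z: "t = z \<bullet> y" "N z \<le> 1" by blast
    then have "norm z \<le> 1 / c"
      using c order_trans[OF c(2) z(2)] by (simp add: pos_le_divide_eq mult.commute)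
    have "t \<le> norm z * norm y" using z(1) norm_cauchy_schwarz[of z y] by simp
    also have "\<dots> \<le> 1 / c * norm y" by (rule mult_right_mono[OF \<open>norm z \<le> 1 / c\<close> norm_ge_zero])
    finally show "t \<le> 1 / c * norm y" .
  qed
  have ne: "{z \<bullet> y | z. N z \<le> 1} \<noteq> {}" for y
    using is_norm_zero[OF assms] by (auto intro!: exI[of _ "0::real^'n"])
  have "y \<in> dual_ball N \<longleftrightarrow> (\<forall>z. N z \<le> 1 \<longrightarrow> z \<bullet> y \<le> 1)" for y
    unfolding dual_ball_def dual_norm_def mem_Collect_eq cSup_le_iff[OF ne bdd] by blast
  then show ?thesis by blast
qed

lemma closed_dual_ball:
  fixes N :: "real^'n \<Rightarrow> real"
  assumes "is_norm N" shows "closed (dual_ball N)"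
  unfolding dual_ball_eq_INT[OF assms] by (intro closed_INT ballI closed_halfspace_le)

lemma zero_in_dual_ball:
  fixes N :: "real^'n \<Rightarrow> real"
  assumes "is_norm N" shows "0 \<in> dual_ball N"
  unfolding dual_ball_eq_INT[OF assms] by simp

lemma P_min_residual_le:
  fixes N1 N2 :: "real^'n \<Rightarrow> real"
  assumes "is_norm N1" "is_norm N2" "lam > 0" "mu > 0" "is_P_min N1 N2 lam mu x v w"
  shows "norm (x - v - w) \<le> sqrt (2 * mu * (N1 x + lam / 2 * (norm x)\<^sup>2))"
proof -
  have "P_obj N1 lam mu x v w \<le> P_obj N1 lam mu x x 0"
    using assms(5) zero_in_dual_ball[OF assms(2)] unfolding is_P_min_def by blast
  then have "N1 v + lam / 2 * (norm v)\<^sup>2 + 1 / (2 * mu) * (norm (x - v - w))\<^sup>2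
               \<le> N1 x + lam / 2 * (norm x)\<^sup>2"
    unfolding P_obj_def by simp
  moreover have "N1 v \<ge> 0" "lam / 2 * (norm v)\<^sup>2 \<ge> 0"
    using is_norm_nonneg[OF assms(1)] assms(3) by simp_all
  ultimately have "1 / (2 * mu) * (norm (x - v - w))\<^sup>2 \<le> N1 x + lam / 2 * (norm x)\<^sup>2"
    by linarith
  then have "(norm (x - v - w))\<^sup>2 \<le> 2 * mu * (N1 x + lam / 2 * (norm x)\<^sup>2)"
    using assms(4) by (simp add: field_simps)
  then show ?thesis by (rule real_le_rsqrt)
qed

lemma P_min_le_feasible:
  assumes "lam > 0" "mu > 0" "is_P_min N1 N2 lam mu x v w" "x - u' \<in> dual_ball N2"
  shows "N1 v \<le> N1 u' + lam / 2 * (norm u')\<^sup>2"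
proof -
  have "P_obj N1 lam mu x v w \<le> P_obj N1 lam mu x u' (x - u')"
    using assms(3,4) unfolding is_P_min_def by blast
  then have "N1 v + lam / 2 * (norm v)\<^sup>2 + 1 / (2 * mu) * (norm (x - v - w))\<^sup>2
               \<le> N1 u' + lam / 2 * (norm u')\<^sup>2"
    unfolding P_obj_def by simp
  moreover have "lam / 2 * (norm v)\<^sup>2 \<ge> 0" "1 / (2 * mu) * (norm (x - v - w))\<^sup>2 \<ge> 0"
    using assms(1,2) by simp_all
  ultimately show ?thesis by linarith
qed

lemma P_min_residual_tendsto_zero:
  fixes N1 N2 :: "real^'n \<Rightarrow> real"
  assumes "is_norm N1" "is_norm N2"
    and "\<And>lam mu. lam > 0 \<Longrightarrow> mu > 0 \<Longrightarrow> is_P_min N1 N2 lam mu x (v lam mu) (w lam mu)"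
  shows "((\<lambda>(lam, mu). (x - w lam mu) - v lam mu) \<longlongrightarrow> 0) (at (0, 0) within {0<..} \<times> {0<..})"
proof (rule Lim_null_comparison)
  let ?b = "\<lambda>(lam, mu). sqrt (2 * mu * (N1 x + lam / 2 * (norm x)\<^sup>2))"
  show "\<forall>\<^sub>F p in at (0, 0) within {0<..} \<times> {0<..}.
          norm ((\<lambda>(lam, mu). (x - w lam mu) - v lam mu) p) \<le> ?b p"
    unfolding eventually_at_filter
  proof (intro always_eventually allI impI)
    fix p :: "real \<times> real" assume "p \<in> {0<..} \<times> {0<..}"
    then obtain lam mu where p: "p = (lam, mu)" "lam > 0" "mu > 0" by auto
    have "norm ((\<lambda>(lam, mu). (x - w lam mu) - v lam mu) p) = norm (x - v lam mu - w lam mu)"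
      using p(1) by (simp add: algebra_simps)
    also have "\<dots> \<le> ?b p"
      using P_min_residual_le[OF assms(1,2) p(2,3) assms(3)[OF p(2,3)]] p(1) by simp
    finally show "norm ((\<lambda>(lam, mu). (x - w lam mu) - v lam mu) p) \<le> ?b p" .
  qed
  have "(?b \<longlongrightarrow> ?b (0, 0)) (at (0, 0) within {0<..} \<times> {0<..})"
    unfolding case_prod_unfold by (intro tendsto_intros) simp_all
  then show "(?b \<longlongrightarrow> 0) (at (0, 0) within {0<..} \<times> {0<..})" by simp
qed

lemma cluster_point_tendsto_diff_zero:
  fixes s t :: "nat \<Rightarrow> 'a::real_normed_vector"
  assumes "(\<lambda>k. s k - t k) \<longlonglongrightarrow> 0"
  shows "cluster_point s p \<longleftrightarrow> cluster_point t p"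
proof -
  have "((s \<circ> r) \<longlonglongrightarrow> p) \<longleftrightarrow> ((t \<circ> r) \<longlonglongrightarrow> p)" if "strict_mono r" for r
  proof -
    have d: "(\<lambda>k. (s \<circ> r) k - (t \<circ> r) k) \<longlonglongrightarrow> 0"
      using LIMSEQ_subseq_LIMSEQ[OF assms that] by (simp add: o_def)
    show ?thesis using Lim_transform[OF _ d] Lim_transform2[OF _ d] by blast
  qed
  then show ?thesis unfolding cluster_point_def by blast
qed

lemma cluster_point_in_U_set:
  fixes N1 N2 :: "real^'n \<Rightarrow> real" and l m :: "nat \<Rightarrow> real"
  assumes "is_norm N1" "is_norm N2"
    and "\<And>lam mu. lam > 0 \<Longrightarrow> mu > 0 \<Longrightarrow> is_P_min N1 N2 lam mu x (v lam mu) (w lam mu)"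
    and pos: "\<And>k. l k > 0 \<and> m k > 0" and "l \<longlonglongrightarrow> 0"
    and res: "(\<lambda>k. (x - w (l k) (m k)) - v (l k) (m k)) \<longlonglongrightarrow> 0"
    and "cluster_point (\<lambda>k. v (l k) (m k)) p"
  shows "p \<in> U_set N1 N2 x"
proof -
  obtain r where r: "strict_mono r" and vr: "(\<lambda>k. v (l (r k)) (m (r k))) \<longlonglongrightarrow> p"
    using assms(7) unfolding cluster_point_def o_def by blast
  have "(\<lambda>k. (x - w (l (r k)) (m (r k))) - v (l (r k)) (m (r k))) \<longlonglongrightarrow> 0"
    using LIMSEQ_subseq_LIMSEQ[OF res r] by (simp add: o_def)
  from tendsto_diff[OF tendsto_diff[OF tendsto_const vr] this]
  have "(\<lambda>k. x - v (l (r k)) (m (r k)) - ((x - w (l (r k)) (m (r k))) - v (l (r k)) (m (r k))))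
          \<longlonglongrightarrow> x - p - 0" .
  then have "(\<lambda>k. w (l (r k)) (m (r k))) \<longlonglongrightarrow> x - p" by simp
  moreover have "w (l (r k)) (m (r k)) \<in> dual_ball N2" for k
    using assms(3) pos unfolding is_P_min_def by blast
  ultimately have feasible: "x - p \<in> dual_ball N2"
    by (rule closed_sequentially[OF closed_dual_ball[OF assms(2)], rotated])
  have "N1 p \<le> N1 u'" if "x - u' \<in> dual_ball N2" for u'
  proof -
    have "(\<lambda>k. l (r k)) \<longlonglongrightarrow> 0"
      using LIMSEQ_subseq_LIMSEQ[OF assms(5) r] by (simp add: o_def)
    then have "(\<lambda>k. N1 u' + l (r k) / 2 * (norm u')\<^sup>2) \<longlonglongrightarrow> N1 u' + 0"
      by (intro tendsto_add tendsto_const tendsto_mult_left_zero tendsto_divide_zero)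
    moreover have "N1 (v (l (r k)) (m (r k))) \<le> N1 u' + l (r k) / 2 * (norm u')\<^sup>2" for k
      using P_min_le_feasible[OF _ _ assms(3) that] pos by blast
    ultimately have "N1 p \<le> N1 u' + 0"
      using LIMSEQ_le[OF tendsto_is_norm[OF assms(1) vr]] by blast
    then show ?thesis by simp
  qed
  with feasible show ?thesis unfolding U_set_def by blast
qed

theorem lemma5p2:
  fixes N1 N2 :: "real^'n \<Rightarrow> real" and x :: "real^'n"
    and v w :: "real \<Rightarrow> real \<Rightarrow> real^'n"
  assumes "is_norm N1" and "is_norm N2"
    and "\<And>lam mu. lam > 0 \<Longrightarrow> mu > 0 \<Longrightarrow> is_P_min N1 N2 lam mu x (v lam mu) (w lam mu)"
  shows "((\<lambda>(lam, mu). v lam mu + w lam mu) \<longlongrightarrow> x) (at (0, 0) within {0<..} \<times> {0<..})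
     \<and> ((\<lambda>(lam, mu). (x - w lam mu) - v lam mu) \<longlongrightarrow> 0) (at (0, 0) within {0<..} \<times> {0<..})
     \<and> (\<forall>l m :: nat \<Rightarrow> real. (\<forall>k. l k > 0 \<and> m k > 0) \<longrightarrow> l \<longlonglongrightarrow> 0 \<longrightarrow> m \<longlonglongrightarrow> 0 \<longrightarrow>
           {p. cluster_point (\<lambda>k. v (l k) (m k)) p} = {p. cluster_point (\<lambda>k. x - w (l k) (m k)) p}
         \<and> {p. cluster_point (\<lambda>k. v (l k) (m k)) p} \<subseteq> U_set N1 N2 x)"
proof (intro conjI allI impI)
  note res = P_min_residual_tendsto_zero[OF assms]
  then show "((\<lambda>(lam, mu). (x - w lam mu) - v lam mu) \<longlongrightarrow> 0) (at (0, 0) within {0<..} \<times> {0<..})" .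
  have "((\<lambda>p. x - (\<lambda>(lam, mu). (x - w lam mu) - v lam mu) p) \<longlongrightarrow> x - 0)
          (at (0, 0) within {0<..} \<times> {0<..})"
    using res by (intro tendsto_intros)
  then show "((\<lambda>(lam, mu). v lam mu + w lam mu) \<longlongrightarrow> x) (at (0, 0) within {0<..} \<times> {0<..})"
    by (simp add: case_prod_unfold add.commute)
  fix l m :: "nat \<Rightarrow> real"
  assume pos: "\<forall>k. l k > 0 \<and> m k > 0" and l0: "l \<longlonglongrightarrow> 0" and m0: "m \<longlonglongrightarrow> 0"
  have "filterlim (\<lambda>k. (l k, m k)) (at (0, 0) within {0<..} \<times> {0<..}) sequentially"
    using pos l0 m0 by (intro filterlim_at_withinI tendsto_Pair always_eventually) auto
  from filterlim_compose[OF res this]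
  have res_seq: "(\<lambda>k. (x - w (l k) (m k)) - v (l k) (m k)) \<longlonglongrightarrow> 0" by simp
  show "{p. cluster_point (\<lambda>k. v (l k) (m k)) p} = {p. cluster_point (\<lambda>k. x - w (l k) (m k)) p}"
    using cluster_point_tendsto_diff_zero[OF res_seq] by blast
  show "{p. cluster_point (\<lambda>k. v (l k) (m k)) p} \<subseteq> U_set N1 N2 x"
    using cluster_point_in_U_set[OF assms _ l0 res_seq] pos by blast
qed

end
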